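(* Let $V\subseteq\mathbb{R}^n$ be convex, $F\colon V\to\mathbb{R}^n$ globally Lipschitz, and $\tilde F\colon V^N\to\mathbb{R}^{nN}$, $\tilde F(u)=(F(u_1)^T,\dots,F(u_N)^T)^T$. For $1\le p\le\infty$ and a positive diagonal $Q$, $M^+_{p,Q}[\tilde F]\le M_{p,Q}[F]$.
   Context: On $\mathbb{R}^{nN}$, $\|u\|_{p,Q}=\big\|(\|Qu_1\|_p,\dots,\|Qu_N\|_p)^T\big\|_p$ and $M^+_{p,Q}[\tilde F]=\sup_{u\neq v\in V^N}\lim_{h\to0^+}\frac1h\left(\frac{\|u-v+h(\tilde F(u)-\tilde F(v))\|_{p,Q}}{\|u-v\|_{p,Q}}-1\right)$. On $\mathbb{R}^n$, $\|x\|_{p,Q}=\|Qx\|_p$ and $M_{p,Q}[F]=\lim_{h\to0^+}\sup_{x\neq y\in V}\frac1h\left(\frac{\|x-y+h(F(x)-F(y))\|_{p,Q}}{\|x-y\|_{p,Q}}-1\right)$. *)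

theory Defs
  imports "HOL-Analysis.Analysis"
begin

definition pnorm :: "ereal \<Rightarrow> real^'n \<Rightarrow> real" where
  "pnorm p x = (if p = \<infinity> then Max (range (\<lambda>i. \<bar>x $ i\<bar>))
               else (\<Sum>i\<in>UNIV. \<bar>x $ i\<bar> powr real_of_ereal p) powr (1 / real_of_ereal p))"

definition pQnorm :: "ereal \<Rightarrow> real^'n^'n \<Rightarrow> real^'n \<Rightarrow> real" where
  "pQnorm p Q x = pnorm p (Q *v x)"

definition pQnorm_blk :: "ereal \<Rightarrow> real^'n^'n \<Rightarrow> (real^'n)^'N \<Rightarrow> real" where
  "pQnorm_blk p Q u = pnorm p (\<chi> k. pQnorm p Q (u $ k))"

definition pos_diag :: "real^'n^'n \<Rightarrow> bool" where
  "pos_diag Q \<longleftrightarrow> (\<forall>i j. i \<noteq> j \<longrightarrow> Q $ i $ j = 0) \<and> (\<forall>i. Q $ i $ i > 0)"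

definition Ftilde :: "(real^'n \<Rightarrow> real^'n) \<Rightarrow> (real^'n)^'N \<Rightarrow> (real^'n)^'N" where
  "Ftilde F u = (\<chi> k. F (u $ k))"

text \<open>M_{p,Q}[F] = lim_{h->0+} sup_{x ~= y in V} (1/h)(||x-y+h(F x - F y)||/||x-y|| - 1),
  valued in ereal (sup over the empty set is -\<infinity>).\<close>
definition logmu :: "ereal \<Rightarrow> real^'n^'n \<Rightarrow> (real^'n) set \<Rightarrow> (real^'n \<Rightarrow> real^'n) \<Rightarrow> ereal" where
  "logmu p Q V F = Lim (at_right (0::real))
     (\<lambda>h. SUP xy \<in> {(x, y). x \<in> V \<and> y \<in> V \<and> x \<noteq> y}.
        ereal ((1 / h) * (pQnorm p Q (fst xy - snd xy + h *\<^sub>R (F (fst xy) - F (snd xy)))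
                          / pQnorm p Q (fst xy - snd xy) - 1)))"

definition logmu_plus_blk :: "ereal \<Rightarrow> real^'n^'n \<Rightarrow> (real^'n) set
     \<Rightarrow> ((real^'n)^'N \<Rightarrow> (real^'n)^'N) \<Rightarrow> ereal" where
  "logmu_plus_blk p Q V G = (SUP uv \<in> {(u, v). (\<forall>k. u $ k \<in> V) \<and> (\<forall>k. v $ k \<in> V) \<and> u \<noteq> v}.
     ereal (Lim (at_right (0::real))
       (\<lambda>h. (1 / h) * (pQnorm_blk p Q (fst uv - snd uv + h *\<^sub>R (G (fst uv) - G (snd uv)))
                         / pQnorm_blk p Q (fst uv - snd uv) - 1))))"

end

theory Submission
  imports Defs
begin

text \<open>Both sides are built from the difference quotients
  \<open>q(h) = (N (a + h b) / N a - 1) / h\<close> of a seminorm \<open>N\<close>. By convexity of \<open>N\<close>, \<open>q\<close> is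
  nondecreasing in \<open>h > 0\<close> and bounded below by \<open>- N b / N a\<close>, so its limit at \<open>0\<^sup>+\<close> is its
  infimum; thus \<open>M\<^sub>p\<^sub>,\<^sub>Q[F]\<close> is an infimum over \<open>h\<close> of suprema over pairs, and it suffices to
  bound the quotient of \<open>F\<^sup>~\<close> at each fixed \<open>h\<close>. For a pair \<open>u \<noteq> v\<close> let \<open>c\<close> be the largest
  quotient among the blocks with \<open>u\<^sub>k \<noteq> v\<^sub>k\<close>. Every block satisfies
  \<open>\<parallel>u\<^sub>k - v\<^sub>k + h (F u\<^sub>k - F v\<^sub>k)\<parallel> \<le> (1 + h c) \<parallel>u\<^sub>k - v\<^sub>k\<parallel>\<close>, and since the outer \<open>p\<close>-norm is
  monotone and homogeneous, the quotient of \<open>F\<^sup>~\<close> at \<open>(u, v)\<close> is at most \<open>c\<close>, which is the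
  quotient of \<open>F\<close> at the single pair \<open>(u\<^sub>k, v\<^sub>k)\<close> of points of \<open>V\<close>.\<close>

definition seminorm :: "('a::real_vector \<Rightarrow> real) \<Rightarrow> bool" where
  "seminorm N \<longleftrightarrow> (\<forall>x y. N (x + y) \<le> N x + N y) \<and> (\<forall>c x. N (c *\<^sub>R x) = \<bar>c\<bar> * N x)"

lemma seminormI:
  assumes "\<And>x y. N (x + y) \<le> N x + N y" and "\<And>c x. N (c *\<^sub>R x) = \<bar>c\<bar> * N x"
  shows "seminorm N"
  using assms by (simp add: seminorm_def)

lemma seminorm_triangle: "seminorm N \<Longrightarrow> N (x + y) \<le> N x + N y"
  by (simp add: seminorm_def)

lemma seminorm_scaleR: "seminorm N \<Longrightarrow> N (c *\<^sub>R x) = \<bar>c\<bar> * N x"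
  by (simp add: seminorm_def)

lemma seminorm_zero: "seminorm N \<Longrightarrow> N 0 = 0"
  using seminorm_scaleR[of N 0 0] by simp

lemma seminorm_nonneg:
  assumes "seminorm N" shows "0 \<le> N x"
proof -
  have "0 = N (x + (-1) *\<^sub>R x)" using seminorm_zero[OF assms] by simp
  also have "\<dots> \<le> N x + N ((-1) *\<^sub>R x)" by (rule seminorm_triangle[OF assms])
  also have "\<dots> = 2 * N x" using seminorm_scaleR[OF assms, of "-1" x] by simp
  finally show ?thesis by simp
qed

lemma seminorm_compose_linear:
  assumes "seminorm N" and "linear f" shows "seminorm (\<lambda>x. N (f x))"
  using assms by (intro seminormI) (simp_all add: linear_add linear_scale seminorm_def)

definition growth_quotient :: "('a::real_vector \<Rightarrow> real) \<Rightarrow> 'a \<Rightarrow> 'a \<Rightarrow> real \<Rightarrow> real" where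
  "growth_quotient N a b h = (1 / h) * (N (a + h *\<^sub>R b) / N a - 1)"

lemma growth_quotient_eq:
  assumes "N a \<noteq> 0" and "h \<noteq> 0"
  shows "growth_quotient N a b h = (N (a + h *\<^sub>R b) - N a) / h / N a"
  using assms by (simp add: growth_quotient_def field_simps)

lemma growth_quotient_mono:
  assumes N: "seminorm N" and a: "0 < N a" and h: "0 < h1" "h1 \<le> h2"
  shows "growth_quotient N a b h1 \<le> growth_quotient N a b h2"
proof -
  define t where "t = h1 / h2"
  have t: "0 < t" "t \<le> 1" using h by (auto simp: t_def)
  have "a + h1 *\<^sub>R b = (1 - t) *\<^sub>R a + t *\<^sub>R (a + h2 *\<^sub>R b)"
    using h by (simp add: t_def algebra_simps)
  then have "N (a + h1 *\<^sub>R b) \<le> N ((1 - t) *\<^sub>R a) + N (t *\<^sub>R (a + h2 *\<^sub>R b))"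
    using seminorm_triangle[OF N] by simp
  also have "\<dots> = (1 - t) * N a + t * N (a + h2 *\<^sub>R b)"
    using t by (simp add: seminorm_scaleR[OF N])
  finally have "N (a + h1 *\<^sub>R b) \<le> (1 - t) * N a + t * N (a + h2 *\<^sub>R b)" .
  then have "N (a + h1 *\<^sub>R b) - N a \<le> (h1 / h2) * (N (a + h2 *\<^sub>R b) - N a)"
    by (simp add: t_def algebra_simps)
  then have "(N (a + h1 *\<^sub>R b) - N a) / h1 \<le> (N (a + h2 *\<^sub>R b) - N a) / h2"
    using h by (simp add: field_simps)
  then have "(N (a + h1 *\<^sub>R b) - N a) / h1 / N a \<le> (N (a + h2 *\<^sub>R b) - N a) / h2 / N a"
    by (rule divide_right_mono) (use a in linarith)
  then show ?thesis
    using a h by (simp add: growth_quotient_eq)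
qed

lemma growth_quotient_lower_bound:
  assumes N: "seminorm N" and a: "0 < N a" and h: "0 < h"
  shows "- N b / N a \<le> growth_quotient N a b h"
proof -
  have "N a \<le> N (a + h *\<^sub>R b) + N ((-h) *\<^sub>R b)"
    using seminorm_triangle[OF N, of "a + h *\<^sub>R b" "(-h) *\<^sub>R b"] by simp
  then have "- N b \<le> (N (a + h *\<^sub>R b) - N a) / h"
    using h seminorm_scaleR[OF N, of "-h" b] by (simp add: field_simps)
  then have "- N b / N a \<le> (N (a + h *\<^sub>R b) - N a) / h / N a"
    by (rule divide_right_mono) (use a in linarith)
  then show ?thesis
    using a h by (simp add: growth_quotient_eq)
qed

lemma Lim_at_right_0_eq_Inf:
  fixes f :: "real \<Rightarrow> 'a::{linorder_topology, conditionally_complete_linorder}"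
  assumes mono: "\<And>a b. 0 < a \<Longrightarrow> a \<le> b \<Longrightarrow> f a \<le> f b"
    and bnd: "\<And>a. 0 < a \<Longrightarrow> K \<le> f a"
  shows "Lim (at_right 0) f = Inf (f ` {0<..})"
proof -
  have "(f \<longlongrightarrow> Inf (f ` ({0<..} \<inter> UNIV))) (at 0 within ({0<..} \<inter> UNIV))"
    by (rule Lim_right_bound[where K = K]) (auto intro: mono bnd)
  then show ?thesis
    by (intro tendsto_Lim) (simp_all add: trivial_limit_at_right_real)
qed

lemma Lim_growth_quotient_le:
  assumes N: "seminorm N" and a: "0 < N a" and h: "0 < h"
  shows "Lim (at_right 0) (growth_quotient N a b) \<le> growth_quotient N a b h"
proof -
  have bnd: "\<And>h. 0 < h \<Longrightarrow> - N b / N a \<le> growth_quotient N a b h"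
    using growth_quotient_lower_bound[OF N a] .
  have "Lim (at_right 0) (growth_quotient N a b) = Inf (growth_quotient N a b ` {0<..})"
    using growth_quotient_mono[OF N a] bnd by (rule Lim_at_right_0_eq_Inf)
  also have "\<dots> \<le> growth_quotient N a b h"
    using h bnd by (intro cInf_lower bdd_belowI2) auto
  finally show ?thesis .
qed

lemma convex_on_powr_nonneg:
  assumes P: "1 \<le> P" shows "convex_on {0..} (\<lambda>x::real. x powr P)"
proof (rule convex_onI)
  fix t x y :: real
  assume t: "0 < t" "t < 1" and xy: "x \<in> {0..}" "y \<in> {0..}"
  have shrink: "(s * z) powr P \<le> s * z powr P" if "0 \<le> s" "s \<le> 1" "0 \<le> z" for s z :: real
  proof -
    have "s powr P \<le> s" using that P by (cases "s = 0") (auto intro: powr_le_one_le)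
    then show ?thesis using that by (simp add: powr_mult mult_right_mono)
  qed
  consider "x = 0" | "y = 0" | "0 < x" "0 < y" using xy by force
  then show "((1 - t) *\<^sub>R x + t *\<^sub>R y) powr P \<le> (1 - t) * x powr P + t * y powr P"
  proof cases
    case 1 then show ?thesis using shrink[of t y] t xy P by simp
  next
    case 2 then show ?thesis using shrink[of "1 - t" x] t xy P by simp
  next
    case 3 then show ?thesis using convex_onD[OF powr_convex[OF P], of t x y] t by simp
  qed
qed simp

lemma convex_on_abs_powr:
  assumes P: "1 \<le> P" shows "convex_on UNIV (\<lambda>x::real. \<bar>x\<bar> powr P)"
proof (rule convex_onI)
  fix t a b :: real
  assume t: "0 < t" "t < 1"
  have "\<bar>(1 - t) * a + t * b\<bar> \<le> (1 - t) * \<bar>a\<bar> + t * \<bar>b\<bar>"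
    using t abs_triangle_ineq[of "(1 - t) * a" "t * b"] by (simp add: abs_mult)
  then have "\<bar>(1 - t) * a + t * b\<bar> powr P \<le> ((1 - t) * \<bar>a\<bar> + t * \<bar>b\<bar>) powr P"
    using P by (intro powr_mono2) auto
  also have "\<dots> \<le> (1 - t) * \<bar>a\<bar> powr P + t * \<bar>b\<bar> powr P"
    using convex_onD[OF convex_on_powr_nonneg[OF P], of t "\<bar>a\<bar>" "\<bar>b\<bar>"] t by simp
  finally show "\<bar>(1 - t) *\<^sub>R a + t *\<^sub>R b\<bar> powr P \<le> (1 - t) * \<bar>a\<bar> powr P + t * \<bar>b\<bar> powr P"
    by simp
qed simp

definition lp_norm :: "real \<Rightarrow> real^'n \<Rightarrow> real" where
  "lp_norm P x = (\<Sum>i\<in>UNIV. \<bar>x $ i\<bar> powr P) powr (1 / P)"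

lemma lp_norm_nonneg: "0 \<le> lp_norm P x"
  by (simp add: lp_norm_def)

lemma lp_norm_powr:
  assumes "1 \<le> P" shows "lp_norm P x powr P = (\<Sum>i\<in>UNIV. \<bar>x $ i\<bar> powr P)"
  using assms by (simp add: lp_norm_def powr_powr sum_nonneg)

lemma lp_norm_eq_0D:
  assumes P: "1 \<le> P" and "lp_norm P x = 0" shows "x = 0"
proof -
  have "(\<Sum>i\<in>UNIV. \<bar>x $ i\<bar> powr P) = 0" using assms lp_norm_powr[OF P, of x] by simp
  then show ?thesis by (simp add: sum_nonneg_eq_0_iff vec_eq_iff)
qed

lemma lp_norm_scaleR:
  assumes P: "1 \<le> P" shows "lp_norm P (c *\<^sub>R x) = \<bar>c\<bar> * lp_norm P x"
proof -
  have "lp_norm P (c *\<^sub>R x) = (\<bar>c\<bar> powr P) powr (1 / P) * lp_norm P x"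
    by (simp add: lp_norm_def abs_mult powr_mult sum_distrib_left[symmetric] sum_nonneg)
  also have "(\<bar>c\<bar> powr P) powr (1 / P) = \<bar>c\<bar>" using P by (simp add: powr_powr)
  finally show ?thesis .
qed

lemma convex_on_lp_norm_powr:
  assumes P: "1 \<le> P" shows "convex_on UNIV (\<lambda>x. lp_norm P x powr P)"
proof (rule convex_onI)
  fix t :: real and x y :: "real^'n"
  assume t: "0 < t" "t < 1"
  have "(\<Sum>i\<in>UNIV. \<bar>((1 - t) *\<^sub>R x + t *\<^sub>R y) $ i\<bar> powr P)
      \<le> (\<Sum>i\<in>UNIV. (1 - t) * \<bar>x $ i\<bar> powr P + t * \<bar>y $ i\<bar> powr P)"
    using convex_onD[OF convex_on_abs_powr[OF P]] t by (intro sum_mono) simp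
  then show "lp_norm P ((1 - t) *\<^sub>R x + t *\<^sub>R y) powr P
      \<le> (1 - t) * lp_norm P x powr P + t * lp_norm P y powr P"
    by (simp add: lp_norm_powr[OF P] sum.distrib sum_distrib_left)
qed simp

text \<open>Minkowski's inequality, from convexity of the unit ball: \<open>(x + y) / (a + b)\<close> is the
  convex combination of the unit vectors \<open>x / a\<close> and \<open>y / b\<close> with weights \<open>a / (a + b)\<close>
  and \<open>b / (a + b)\<close>.\<close>
lemma lp_norm_triangle:
  assumes P: "1 \<le> P" shows "lp_norm P (x + y) \<le> lp_norm P x + lp_norm P y"
proof (cases "lp_norm P x = 0 \<or> lp_norm P y = 0")
  case True
  then consider "x = 0" | "y = 0" using lp_norm_eq_0D[OF P] by blast
  then show ?thesis by cases (simp_all add: lp_norm_nonneg)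
next
  case False
  define a b where "a = lp_norm P x" and "b = lp_norm P y"
  have a: "0 < a" and b: "0 < b"
    using False lp_norm_nonneg[of P x] lp_norm_nonneg[of P y] by (simp_all add: a_def b_def less_le)
  define t where "t = b / (a + b)"
  have t: "0 \<le> t" "t \<le> 1" using a b by (auto simp: t_def)
  have "(1 - t) * (1 / a) = 1 / (a + b)" and "t * (1 / b) = 1 / (a + b)"
    using a b by (simp_all add: t_def field_simps)
  then have comb: "(1 - t) *\<^sub>R ((1 / a) *\<^sub>R x) + t *\<^sub>R ((1 / b) *\<^sub>R y) = (1 / (a + b)) *\<^sub>R (x + y)"
    by (simp only: scaleR_scaleR scaleR_add_right)
  have "lp_norm P ((1 / (a + b)) *\<^sub>R (x + y)) powr P \<le> (1 - t) * 1 powr P + t * 1 powr P"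
    using convex_onD[OF convex_on_lp_norm_powr[OF P] t, of "(1 / a) *\<^sub>R x" "(1 / b) *\<^sub>R y"] a b
    unfolding comb by (simp add: lp_norm_scaleR[OF P] a_def b_def)
  then have "lp_norm P ((1 / (a + b)) *\<^sub>R (x + y)) powr P \<le> 1" by simp
  then have "lp_norm P ((1 / (a + b)) *\<^sub>R (x + y)) \<le> 1"
    using P gr_one_powr[of "lp_norm P ((1 / (a + b)) *\<^sub>R (x + y))" P] by fastforce
  then show ?thesis using a b by (simp add: lp_norm_scaleR[OF P] a_def b_def)
qed

lemma lp_norm_mono:
  assumes "1 \<le> P" and "\<And>i. \<bar>x $ i\<bar> \<le> \<bar>y $ i\<bar>" shows "lp_norm P x \<le> lp_norm P y"
  unfolding lp_norm_def using assms by (intro powr_mono2 sum_mono sum_nonneg) auto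

lemma pnorm_finite:
  assumes "1 \<le> p" and "p \<noteq> \<infinity>"
  shows "pnorm p x = lp_norm (real_of_ereal p) x" and "1 \<le> real_of_ereal p"
  using assms by (cases p; simp add: pnorm_def lp_norm_def)+

lemma pnorm_infinity: "pnorm \<infinity> x = Max (range (\<lambda>i. \<bar>x $ i\<bar>))"
  by (simp add: pnorm_def)

lemma seminorm_pnorm:
  assumes p: "1 \<le> p" shows "seminorm (pnorm p)"
proof (cases "p = \<infinity>")
  case True
  show ?thesis
  proof (rule seminormI)
    fix x y :: "real^'a"
    have "\<bar>(x + y) $ i\<bar> \<le> Max (range (\<lambda>i. \<bar>x $ i\<bar>)) + Max (range (\<lambda>i. \<bar>y $ i\<bar>))" for i
    proof -
      have "\<bar>(x + y) $ i\<bar> \<le> \<bar>x $ i\<bar> + \<bar>y $ i\<bar>" by (simp add: abs_triangle_ineq)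
      also have "\<dots> \<le> Max (range (\<lambda>i. \<bar>x $ i\<bar>)) + Max (range (\<lambda>i. \<bar>y $ i\<bar>))"
        by (intro add_mono Max_ge) auto
      finally show ?thesis .
    qed
    then show "pnorm p (x + y) \<le> pnorm p x + pnorm p y"
      using True by (simp add: pnorm_infinity Max_le_iff)
  next
    fix c :: real and x :: "real^'a"
    have "Max (((*) \<bar>c\<bar>) ` range (\<lambda>i. \<bar>x $ i\<bar>)) = \<bar>c\<bar> * Max (range (\<lambda>i. \<bar>x $ i\<bar>))"
      by (rule mono_Max_commute[symmetric]) (auto simp: mono_def mult_left_mono)
    then show "pnorm p (c *\<^sub>R x) = \<bar>c\<bar> * pnorm p x"
      using True by (simp add: pnorm_infinity image_image abs_mult)
  qed
next
  case False
  then show ?thesis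
    by (intro seminormI) (simp_all add: pnorm_finite[OF p False] lp_norm_triangle lp_norm_scaleR)
qed

lemma pnorm_eq_0D:
  assumes p: "1 \<le> p" and "pnorm p x = 0" shows "x = 0"
proof (cases "p = \<infinity>")
  case True
  have "\<bar>x $ i\<bar> \<le> Max (range (\<lambda>i. \<bar>x $ i\<bar>))" for i by (rule Max_ge) auto
  moreover have "Max (range (\<lambda>i. \<bar>x $ i\<bar>)) = 0" using assms True by (simp add: pnorm_infinity)
  ultimately show ?thesis by (simp add: vec_eq_iff)
next
  case False
  then show ?thesis using assms pnorm_finite[OF p False] lp_norm_eq_0D by metis
qed

lemma pnorm_mono:
  assumes p: "1 \<le> p" and le: "\<And>i. \<bar>x $ i\<bar> \<le> \<bar>y $ i\<bar>" shows "pnorm p x \<le> pnorm p y"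
proof (cases "p = \<infinity>")
  case True
  have "\<bar>y $ i\<bar> \<le> Max (range (\<lambda>i. \<bar>y $ i\<bar>))" for i by (rule Max_ge) auto
  then have "\<bar>x $ i\<bar> \<le> Max (range (\<lambda>i. \<bar>y $ i\<bar>))" for i using le[of i] by (meson order_trans)
  then show ?thesis using True by (simp add: pnorm_infinity Max_le_iff)
next
  case False
  then show ?thesis using pnorm_finite[OF p False] lp_norm_mono le by metis
qed

lemma seminorm_pQnorm:
  assumes "1 \<le> p" shows "seminorm (pQnorm p Q)"
proof -
  have "pQnorm p Q = (\<lambda>x. pnorm p (Q *v x))" by (simp add: fun_eq_iff pQnorm_def)
  then show ?thesis by (simp add: seminorm_compose_linear seminorm_pnorm[OF assms])
qed

lemma pos_diag_mult_vec_nth: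
  assumes "pos_diag Q" shows "(Q *v x) $ i = Q $ i $ i * x $ i"
proof -
  have "(Q *v x) $ i = (\<Sum>j\<in>UNIV. Q $ i $ j * x $ j)" by (simp add: matrix_vector_mult_def)
  also have "\<dots> = (\<Sum>j\<in>UNIV. if j = i then Q $ i $ i * x $ i else 0)"
    using assms by (intro sum.cong) (auto simp: pos_diag_def)
  finally show ?thesis by simp
qed

lemma pQnorm_pos:
  assumes p: "1 \<le> p" and Q: "pos_diag Q" and x: "x \<noteq> 0"
  shows "0 < pQnorm p Q x"
proof -
  obtain i where "x $ i \<noteq> 0" using x by (auto simp: vec_eq_iff)
  moreover have "Q $ i $ i \<noteq> 0" using Q by (simp add: pos_diag_def less_imp_neq[symmetric])
  ultimately have "(Q *v x) $ i \<noteq> 0" by (simp add: pos_diag_mult_vec_nth[OF Q])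
  then have "Q *v x \<noteq> 0" by auto
  then show ?thesis
    using pnorm_eq_0D[OF p] seminorm_nonneg[OF seminorm_pnorm[OF p]]
    by (fastforce simp: pQnorm_def less_le)
qed

lemma seminorm_pnorm_blocks:
  fixes N :: "'a::real_vector \<Rightarrow> real"
  assumes p: "1 \<le> p" and N: "seminorm N"
  shows "seminorm (\<lambda>u::'a^'k. pnorm p (\<chi> k. N (u $ k)))"
proof (rule seminormI)
  fix u w :: "'a^'k"
  have "pnorm p (\<chi> k. N ((u + w) $ k)) \<le> pnorm p ((\<chi> k. N (u $ k)) + (\<chi> k. N (w $ k)))"
    using seminorm_triangle[OF N] seminorm_nonneg[OF N] by (intro pnorm_mono[OF p]) (simp add: add_nonneg_nonneg)
  also have "\<dots> \<le> pnorm p (\<chi> k. N (u $ k)) + pnorm p (\<chi> k. N (w $ k))"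
    by (rule seminorm_triangle[OF seminorm_pnorm[OF p]])
  finally show "pnorm p (\<chi> k. N ((u + w) $ k)) \<le> pnorm p (\<chi> k. N (u $ k)) + pnorm p (\<chi> k. N (w $ k))" .
next
  fix c :: real and u :: "'a^'k"
  have "(\<chi> k. N ((c *\<^sub>R u) $ k)) = \<bar>c\<bar> *\<^sub>R (\<chi> k. N (u $ k))"
    by (simp add: vec_eq_iff seminorm_scaleR[OF N])
  then show "pnorm p (\<chi> k. N ((c *\<^sub>R u) $ k)) = \<bar>c\<bar> * pnorm p (\<chi> k. N (u $ k))"
    by (simp add: seminorm_scaleR[OF seminorm_pnorm[OF p]])
qed

lemma pnorm_blocks_pos:
  fixes N :: "'a::real_vector \<Rightarrow> real" and u :: "'a^'k"
  assumes p: "1 \<le> p" and pos: "\<And>x. x \<noteq> 0 \<Longrightarrow> 0 < N x" and u: "u \<noteq> 0"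
  shows "0 < pnorm p (\<chi> k. N (u $ k))"
proof -
  obtain k where "u $ k \<noteq> 0" using u by (auto simp: vec_eq_iff)
  then have "(\<chi> k. N (u $ k)) \<noteq> 0" using pos by (force simp: vec_eq_iff)
  then show ?thesis
    using pnorm_eq_0D[OF p] seminorm_nonneg[OF seminorm_pnorm[OF p]] by (fastforce simp: less_le)
qed

lemma growth_quotient_pnorm_blocks_le:
  fixes N :: "'a::real_vector \<Rightarrow> real" and a b :: "'a^'k"
  assumes p: "1 \<le> p" and N: "seminorm N" and pos: "\<And>x. x \<noteq> 0 \<Longrightarrow> 0 < N x"
    and a: "a \<noteq> 0" and b: "\<And>k. a $ k = 0 \<Longrightarrow> b $ k = 0" and h: "0 < h"
    and c: "\<And>k. a $ k \<noteq> 0 \<Longrightarrow> growth_quotient N (a $ k) (b $ k) h \<le> c"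
  shows "growth_quotient (\<lambda>u. pnorm p (\<chi> k. N (u $ k))) a b h \<le> c"
proof -
  have block: "N (a $ k + h *\<^sub>R b $ k) \<le> (1 + h * c) * N (a $ k)" for k
  proof (cases "a $ k = 0")
    case True
    then show ?thesis using b seminorm_zero[OF N] by simp
  next
    case False
    then have "(N (a $ k + h *\<^sub>R b $ k) - N (a $ k)) / h / N (a $ k) \<le> c"
      using c[OF False] pos[OF False] h by (simp add: growth_quotient_eq)
    then show ?thesis using pos[OF False] h by (simp add: field_simps)
  qed
  obtain k0 where k0: "a $ k0 \<noteq> 0" using a by (auto simp: vec_eq_iff)
  have "0 \<le> (1 + h * c) * N (a $ k0)"
    using block[of k0] seminorm_nonneg[OF N] by (meson order_trans)
  then have c_pos: "0 \<le> 1 + h * c" using pos[OF k0] by (simp add: zero_le_mult_iff)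
  have "pnorm p (\<chi> k. N ((a + h *\<^sub>R b) $ k)) \<le> pnorm p ((1 + h * c) *\<^sub>R (\<chi> k. N (a $ k)))"
    using block seminorm_nonneg[OF N] c_pos by (intro pnorm_mono[OF p]) (simp add: abs_mult)
  also have "\<dots> = (1 + h * c) * pnorm p (\<chi> k. N (a $ k))"
    using c_pos by (simp add: seminorm_scaleR[OF seminorm_pnorm[OF p]])
  finally show ?thesis
    using pnorm_blocks_pos[where N = N, OF p pos a] h by (simp add: growth_quotient_eq field_simps)
qed

lemma Lim_growth_quotient_pnorm_blocks_le:
  fixes N :: "'a::real_vector \<Rightarrow> real" and a b :: "'a^'k"
  assumes p: "1 \<le> p" and N: "seminorm N" and pos: "\<And>x. x \<noteq> 0 \<Longrightarrow> 0 < N x"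
    and a: "a \<noteq> 0" and b: "\<And>k. a $ k = 0 \<Longrightarrow> b $ k = 0" and h: "0 < h"
  obtains k where "a $ k \<noteq> 0"
    and "Lim (at_right 0) (growth_quotient (\<lambda>u. pnorm p (\<chi> k. N (u $ k))) a b)
      \<le> growth_quotient N (a $ k) (b $ k) h"
proof -
  let ?q = "\<lambda>k. growth_quotient N (a $ k) (b $ k) h"
  have "Lim (at_right 0) (growth_quotient (\<lambda>u. pnorm p (\<chi> k. N (u $ k))) a b)
      \<le> growth_quotient (\<lambda>u. pnorm p (\<chi> k. N (u $ k))) a b h"
    using seminorm_pnorm_blocks[OF p N] pnorm_blocks_pos[OF p pos a] h by (rule Lim_growth_quotient_le)
  also have "\<dots> \<le> Max (?q ` {k. a $ k \<noteq> 0})"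
    by (rule growth_quotient_pnorm_blocks_le[OF p N pos a b h]) (auto intro!: Max_ge)
  finally have le_Max: "Lim (at_right 0) (growth_quotient (\<lambda>u. pnorm p (\<chi> k. N (u $ k))) a b)
      \<le> Max (?q ` {k. a $ k \<noteq> 0})" .
  have "{k. a $ k \<noteq> 0} \<noteq> {}" using a by (auto simp: vec_eq_iff)
  then have "Max (?q ` {k. a $ k \<noteq> 0}) \<in> ?q ` {k. a $ k \<noteq> 0}" by (intro Max_in) auto
  then obtain k where "a $ k \<noteq> 0" and "Max (?q ` {k. a $ k \<noteq> 0}) = ?q k" by blast
  with le_Max show ?thesis by (intro that) simp_all
qed

lemma logmu_eq_growth_quotient:
  "logmu p Q V F = Lim (at_right 0) (\<lambda>h. SUP (x, y) \<in> {(x, y). x \<in> V \<and> y \<in> V \<and> x \<noteq> y}.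
     ereal (growth_quotient (pQnorm p Q) (x - y) (F x - F y) h))"
  by (simp add: logmu_def growth_quotient_def case_prod_beta)

lemma logmu_eq_INF:
  assumes p: "1 \<le> p" and Q: "pos_diag Q"
  shows "logmu p Q V F = (INF h \<in> {0<..}. SUP (x, y) \<in> {(x, y). x \<in> V \<and> y \<in> V \<and> x \<noteq> y}.
     ereal (growth_quotient (pQnorm p Q) (x - y) (F x - F y) h))"
  unfolding logmu_eq_growth_quotient
proof (rule Lim_at_right_0_eq_Inf[where K = "-\<infinity>"])
  fix h1 h2 :: real
  assume "0 < h1" "h1 \<le> h2"
  then show "(SUP (x, y) \<in> {(x, y). x \<in> V \<and> y \<in> V \<and> x \<noteq> y}.
      ereal (growth_quotient (pQnorm p Q) (x - y) (F x - F y) h1))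
    \<le> (SUP (x, y) \<in> {(x, y). x \<in> V \<and> y \<in> V \<and> x \<noteq> y}.
      ereal (growth_quotient (pQnorm p Q) (x - y) (F x - F y) h2))"
    by (intro SUP_subset_mono)
      (auto intro!: growth_quotient_mono[OF seminorm_pQnorm[OF p]] pQnorm_pos[OF p Q])
qed simp

lemma logmu_plus_blk_eq_growth_quotient:
  "logmu_plus_blk p Q V G = (SUP (u, v) \<in> {(u, v). (\<forall>k. u $ k \<in> V) \<and> (\<forall>k. v $ k \<in> V) \<and> u \<noteq> v}.
     ereal (Lim (at_right 0) (growth_quotient (pQnorm_blk p Q) (u - v) (G u - G v))))"
  by (simp add: logmu_plus_blk_def growth_quotient_def[abs_def] case_prod_beta)

theorem lemma11:
  fixes V :: "(real^'n) set" and F :: "real^'n \<Rightarrow> real^'n"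
    and Q :: "real^'n^'n" and p :: ereal
  assumes "convex V"
    and "\<exists>L. L-lipschitz_on V F"
    and "1 \<le> p"
    and "pos_diag Q"
  shows "logmu_plus_blk p Q V (Ftilde F :: (real^'n)^'N \<Rightarrow> (real^'n)^'N) \<le> logmu p Q V F"
proof -
  have blk: "pQnorm_blk p Q = (\<lambda>u::(real^'n)^'N. pnorm p (\<chi> k. pQnorm p Q (u $ k)))"
    by (simp add: fun_eq_iff pQnorm_blk_def)
  have "ereal (Lim (at_right 0) (growth_quotient (pQnorm_blk p Q) (u - v) (Ftilde F u - Ftilde F v)))
    \<le> (SUP (x, y) \<in> {(x, y). x \<in> V \<and> y \<in> V \<and> x \<noteq> y}.
      ereal (growth_quotient (pQnorm p Q) (x - y) (F x - F y) h))"
    if u: "\<forall>k. u $ k \<in> V" and v: "\<forall>k. v $ k \<in> V" and "u \<noteq> v" and h: "0 < h"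
    for u v :: "(real^'n)^'N" and h :: real
  proof -
    have a: "u - v \<noteq> 0" and b: "\<And>k. (u - v) $ k = 0 \<Longrightarrow> (Ftilde F u - Ftilde F v) $ k = 0"
      using \<open>u \<noteq> v\<close> by (simp_all add: Ftilde_def)
    obtain k where "(u - v) $ k \<noteq> 0" and
      "Lim (at_right 0) (growth_quotient (pQnorm_blk p Q) (u - v) (Ftilde F u - Ftilde F v))
        \<le> growth_quotient (pQnorm p Q) ((u - v) $ k) ((Ftilde F u - Ftilde F v) $ k) h"
      using Lim_growth_quotient_pnorm_blocks_le[OF assms(3) seminorm_pQnorm[OF assms(3)]
          pQnorm_pos[OF assms(3,4)] a b h]
      unfolding blk by blast
    then show ?thesis
      using u v by (intro SUP_upper2[where i = "(u $ k, v $ k)"]) (auto simp: Ftilde_def)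
  qed
  then show ?thesis
    unfolding logmu_plus_blk_eq_growth_quotient logmu_eq_INF[OF assms(3,4)]
    by (auto intro!: SUP_least INF_greatest)
qed

end
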